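(* Under the assumptions of the semi-offline identification result, let $\tilde Q^t$ be a candidate Q-function, $\tilde V^{t-1}=\sum_{A'^t}\tilde Q^t\,\pi_\alpha(A'^t\mid\underline X'^{t-1},\underline A'^{t-1})$, and let $\rho^t_{Semi}$ be computed with a candidate propensity model $\hat\pi_\beta$ ($\rho^0_{Semi}=1$). Define the DRL estimator $$J_{DRL\text{-}Semi}=\hat{\mathbb{E}}_{n'}\Big[\rho^T_{Semi}C'+\sum_{t=1}^T\big(-\rho^t_{Semi}\tilde Q^t+\rho^{t-1}_{Semi}\tilde V^{t-1}\big)\Big].$$ Then $J_{DRL\text{-}Semi}$ is doubly robust: it is consistent for $J$ if either $\hat\pi_\beta$ is correctly specified ($\hat\pi_\beta(R\ge R'^t\mid X_o)=\pi_\beta(R\ge R'^t\mid X_o)$ for all $t$), or $\tilde Q^t$ equals the true semi-offline Q-function $Q^t_{Semi}$ for all $t$.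
   Context: Setting: full features $X_{(1)}$ (finitely valued), label $Y$, missingness $R\in\{0,1\}^{d_x}$ with mechanism $\pi_\beta$; MAR: $\pi_\beta(R\mid X_{(1)})=\pi_\beta(R\mid X_o)$ with $X_o$ always observed; no direct effect, consistency, no interference, static features. AFA policy $\pi_\alpha$ with actions in $\{1,\dots,d_x+1\}$ (acquire feature or stop at step $T$), histories $\underline X^t=(X^0,\dots,X^t)$, $\underline A^t=(A^1,\dots,A^t)$; $J=\mathbb{E}[C_{(\pi_\alpha)}]$ the expected misclassification cost under $\pi_\alpha$ with a fixed deterministic classifier. Semi-offline sampling distribution $p'$: $(X_{(1)},Y,R)\sim p$, actions from a blocked simulation policy $\pi'_{sim}(A'^t\mid\underline X'^{t-1},\underline A'^{t-1},R)$ (never acquires features with $R_i=0$; otherwise positive wherever $\pi_{sim}$ is; $\pi_{sim}$ satisfies off-policy positivity w.r.t. $\pi_\alpha$), revealed features $X'^t=X_{(1),A'^t}$, simulated cost $C'$; $\hat{\mathbb{E}}_{n'}$ is the empirical mean over i.i.d. simulated trajectories. Semi-offline positivity: if a trajectory has positive probability under $\pi_\alpha$ then $\pi_\beta(R\ge r'\mid x_o)>0$, $r'$ the indicator of acquired features. $R'^t$ indicator of features acquired by $\underline A'^t$, $\ge$ componentwise. Weights $\rho^t_{Semi}=\prod_{\tau=1}^t\frac{\pi_\alpha(A'^\tau\mid\underline X'^{\tau-1},\underline A'^{\tau-1})}{\pi'_{sim}(A'^\tau\mid\underline X'^{\tau-1},\underline A'^{\tau-1},R)}\cdot\frac{\mathbb{I}(R\ge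 R'^t)}{\hat\pi_\beta(R\ge R'^t\mid X_o)}$. True Q-function $Q^t_{Semi}=\mathbb{E}_{p'}[C'_{(\overline\pi^{t+1}_\alpha)}\mid\underline X'^{t-1},\underline A'^t,X_o]$, where $C'_{(\overline\pi^{t+1}_\alpha)}$ is the potential outcome of $C'$ had actions from step $t+1$ on followed $\pi_\alpha$. *)

theory Defs
  imports "HOL-Probability.Probability" "HOL-Probability.Product_PMF"
begin

(* A history of steps: each step records the action A^t (None = stop,
   Some i = acquire feature i) and the revealed value X^t (None for stop). *)
type_synonym ('f,'v) steps = "('f option \<times> 'v option) list"

definition reveal :: "('f \<Rightarrow> 'v) \<Rightarrow> 'f option \<Rightarrow> 'v option" where
  "reveal x a = map_option x a"

fun gen :: "('o \<Rightarrow> ('f,'v) steps \<Rightarrow> 'f option pmf) \<Rightarrow> ('f \<Rightarrow> 'v) \<Rightarrow> 'o \<Rightarrow> nat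
             \<Rightarrow> ('f,'v) steps \<Rightarrow> ('f,'v) steps pmf" where
  "gen pol x xo 0 hs = return_pmf hs"
| "gen pol x xo (Suc k) hs =
     bind_pmf (pol xo hs) (\<lambda>a. gen pol x xo k (hs @ [(a, reveal x a)]))"

definition acquired :: "('f,'v) steps \<Rightarrow> 'f set" where
  "acquired hs = {i. Some i \<in> fst ` set hs}"

definition allowed :: "'f set \<Rightarrow> 'f option \<Rightarrow> bool" where
  "allowed r a = (case a of None \<Rightarrow> True | Some i \<Rightarrow> i \<in> r)"

(* p: (X_o, X_(1), Y) ~ pXY, R ~ piB(. | X_o)   (MAR) *)
definition full_dist ::
  "('o \<times> ('f \<Rightarrow> 'v) \<times> 'y) pmf \<Rightarrow> ('o \<Rightarrow> 'f set pmf) \<Rightarrow> ('o \<times> ('f \<Rightarrow> 'v) \<times> 'y \<times> 'f set) pmf" where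
  "full_dist pXY piB =
     bind_pmf pXY (\<lambda>(xo, x, y). map_pmf (\<lambda>r. (xo, x, y, r)) (piB xo))"

definition semi_dist ::
  "('o \<times> ('f \<Rightarrow> 'v) \<times> 'y) pmf \<Rightarrow> ('o \<Rightarrow> 'f set pmf)
   \<Rightarrow> ('f set \<Rightarrow> 'o \<Rightarrow> ('f,'v) steps \<Rightarrow> 'f option pmf) \<Rightarrow> nat
   \<Rightarrow> (('o \<times> ('f \<Rightarrow> 'v) \<times> 'y \<times> 'f set) \<times> ('f,'v) steps) pmf" where
  "semi_dist pXY piB piSimB T =
     bind_pmf (full_dist pXY piB)
       (\<lambda>(xo, x, y, r). map_pmf (\<lambda>tr. ((xo, x, y, r), tr)) (gen (piSimB r) x xo T []))"

definition online_J ::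
  "('o \<times> ('f \<Rightarrow> 'v) \<times> 'y) pmf \<Rightarrow> ('o \<Rightarrow> ('f,'v) steps \<Rightarrow> 'f option pmf)
   \<Rightarrow> ('o \<Rightarrow> ('f,'v) steps \<Rightarrow> 'y \<Rightarrow> real) \<Rightarrow> nat \<Rightarrow> real" where
  "online_J pXY piA cost T =
     measure_pmf.expectation
       (bind_pmf pXY (\<lambda>(xo, x, y). map_pmf (\<lambda>tr. cost xo tr y) (gen piA x xo T [])))
       (\<lambda>c. c)"

definition rho ::
  "('o \<Rightarrow> ('f,'v) steps \<Rightarrow> 'f option pmf) \<Rightarrow> ('f set \<Rightarrow> 'o \<Rightarrow> ('f,'v) steps \<Rightarrow> 'f option pmf)
   \<Rightarrow> ('o \<Rightarrow> 'f set \<Rightarrow> real) \<Rightarrow> 'f set \<Rightarrow> 'o \<Rightarrow> ('f,'v) steps \<Rightarrow> nat \<Rightarrow> real" where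
  "rho piA piSimB piBhat r xo tr t =
     (if t = 0 then 1 else
        (\<Prod>\<tau><t. pmf (piA xo (take \<tau> tr)) (fst (tr ! \<tau>))
                 / pmf (piSimB r xo (take \<tau> tr)) (fst (tr ! \<tau>)))
        * (if acquired (take t tr) \<subseteq> r then 1 else 0)
        / piBhat xo (acquired (take t tr)))"

definition Vtilde ::
  "(nat \<Rightarrow> 'o \<Rightarrow> ('f,'v) steps \<Rightarrow> 'f option \<Rightarrow> real) \<Rightarrow> ('o \<Rightarrow> ('f,'v) steps \<Rightarrow> 'f option pmf)
   \<Rightarrow> nat \<Rightarrow> 'o \<Rightarrow> ('f,'v) steps \<Rightarrow> real" where
  "Vtilde Qt piA t xo h = (\<Sum>a\<in>UNIV. Qt t xo h a * pmf (piA xo h) a)"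

definition drl_summand ::
  "('o \<Rightarrow> ('f,'v) steps \<Rightarrow> 'f option pmf) \<Rightarrow> ('f set \<Rightarrow> 'o \<Rightarrow> ('f,'v) steps \<Rightarrow> 'f option pmf)
   \<Rightarrow> ('o \<Rightarrow> 'f set \<Rightarrow> real) \<Rightarrow> (nat \<Rightarrow> 'o \<Rightarrow> ('f,'v) steps \<Rightarrow> 'f option \<Rightarrow> real)
   \<Rightarrow> ('o \<Rightarrow> ('f,'v) steps \<Rightarrow> 'y \<Rightarrow> real) \<Rightarrow> nat
   \<Rightarrow> ('o \<times> ('f \<Rightarrow> 'v) \<times> 'y \<times> 'f set) \<times> ('f,'v) steps \<Rightarrow> real" where
  "drl_summand piA piSimB piBhat Qt cost T \<omega> =
     (case \<omega> of ((xo, x, y, r), tr) \<Rightarrow>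
        rho piA piSimB piBhat r xo tr T * cost xo tr y
        + (\<Sum>t\<in>{1..T}. - rho piA piSimB piBhat r xo tr t * Qt t xo (take (t - 1) tr) (fst (tr ! (t - 1)))
                        + rho piA piSimB piBhat r xo tr (t - 1) * Vtilde Qt piA t xo (take (t - 1) tr)))"

definition J_DRL ::
  "('o \<Rightarrow> ('f,'v) steps \<Rightarrow> 'f option pmf) \<Rightarrow> ('f set \<Rightarrow> 'o \<Rightarrow> ('f,'v) steps \<Rightarrow> 'f option pmf)
   \<Rightarrow> ('o \<Rightarrow> 'f set \<Rightarrow> real) \<Rightarrow> (nat \<Rightarrow> 'o \<Rightarrow> ('f,'v) steps \<Rightarrow> 'f option \<Rightarrow> real)
   \<Rightarrow> ('o \<Rightarrow> ('f,'v) steps \<Rightarrow> 'y \<Rightarrow> real) \<Rightarrow> nat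
   \<Rightarrow> nat \<Rightarrow> (nat \<Rightarrow> ('o \<times> ('f \<Rightarrow> 'v) \<times> 'y \<times> 'f set) \<times> ('f,'v) steps) \<Rightarrow> real" where
  "J_DRL piA piSimB piBhat Qt cost T n \<omega> =
     (\<Sum>i<n. drl_summand piA piSimB piBhat Qt cost T (\<omega> i)) / real n"

definition prefix_event ::
  "nat \<Rightarrow> 'o \<Rightarrow> ('f,'v) steps \<Rightarrow> 'f option
   \<Rightarrow> (('o \<times> ('f \<Rightarrow> 'v) \<times> 'y \<times> 'f set) \<times> ('f,'v) steps) set" where
  "prefix_event t xo h a =
     {((xo', x, y, r), tr). xo' = xo \<and> take (t - 1) tr = h \<and> fst (tr ! (t - 1)) = a}"

(* True Q-function Q^t_Semi = E_{p'}[ C'_(pibar^{t+1}_alpha) | X'^{<t}, A'^{\<le>t}, X_o ]: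
   the potential outcome keeps A'^1..A'^t, reveals X'^t = X_(1),A'^t and then
   follows piA for the remaining T - t steps (features from X_(1)). *)
definition Q_true ::
  "('o \<times> ('f \<Rightarrow> 'v) \<times> 'y) pmf \<Rightarrow> ('o \<Rightarrow> 'f set pmf)
   \<Rightarrow> ('f set \<Rightarrow> 'o \<Rightarrow> ('f,'v) steps \<Rightarrow> 'f option pmf) \<Rightarrow> ('o \<Rightarrow> ('f,'v) steps \<Rightarrow> 'f option pmf)
   \<Rightarrow> ('o \<Rightarrow> ('f,'v) steps \<Rightarrow> 'y \<Rightarrow> real) \<Rightarrow> nat
   \<Rightarrow> nat \<Rightarrow> 'o \<Rightarrow> ('f,'v) steps \<Rightarrow> 'f option \<Rightarrow> real" where
  "Q_true pXY piB piSimB piA cost T t xo h a =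
     measure_pmf.expectation
       (cond_pmf (semi_dist pXY piB piSimB T) (prefix_event t xo h a))
       (\<lambda>((xo', x, y, r), tr).
          measure_pmf.expectation (gen piA x xo (T - t) (h @ [(a, reveal x a)]))
            (\<lambda>tr'. cost xo tr' y))"

end

theory Submission
  imports Defs
begin

text \<open>The DRL summand has mean \<open>J\<close> under the semi-offline distribution in either case, and as that
  distribution has finite support, Hoeffding's inequality turns this into consistency.
  For the mean: a prefix \<open>h\<close> of length \<open>t\<close> is produced by the blocked simulation policy with its
  own path probability; multiplying by \<open>\<rho>\<^sup>t\<close> turns this into the path probability under \<open>\<pi>\<^sub>\<alpha>\<close>
  times \<open>\<bbbI>(R \<ge> R'\<^sup>t) / \<pi>\<^sub>\<beta>(R \<ge> R'\<^sup>t | X\<^sub>o)\<close>. With correct propensities (semi-offline positivity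
  excludes \<open>0/0\<close>) every \<open>\<rho>\<^sup>t\<close>-weighted term therefore has its online mean, and online the terms
  \<open>Q\<^sup>t\<close> and \<open>V\<^sup>t\<^sup>-\<^sup>1\<close> have equal means whatever the candidate Q-function is. With the true Q-function
  instead, \<open>\<rho>\<^sup>t Q\<^sup>t\<close> and \<open>\<rho>\<^sup>t\<^sup>-\<^sup>1 V\<^sup>t\<^sup>-\<^sup>1\<close> have the means of \<open>\<rho>\<^sup>t\<close> resp. \<open>\<rho>\<^sup>t\<^sup>-\<^sup>1\<close> times the expected
  cost-to-go under \<open>\<pi>\<^sub>\<alpha>\<close>, so the correction terms telescope down to the cost-to-go from the empty
  history, which is \<open>J\<close>.\<close>

section \<open>Trajectories of a policy\<close>

definition path_prob :: "('o \<Rightarrow> ('f,'v) steps \<Rightarrow> 'f option pmf) \<Rightarrow> 'o \<Rightarrow> ('f,'v) steps \<Rightarrow> real" where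
  "path_prob pol xo h = (\<Prod>\<tau><length h. pmf (pol xo (take \<tau> h)) (fst (h ! \<tau>)))"

definition consistent :: "('f \<Rightarrow> 'v) \<Rightarrow> ('f,'v) steps \<Rightarrow> bool" where
  "consistent x h = (\<forall>\<tau><length h. snd (h ! \<tau>) = reveal x (fst (h ! \<tau>)))"

definition path_weight :: "('o \<Rightarrow> ('f,'v) steps \<Rightarrow> 'f option pmf) \<Rightarrow> ('f \<Rightarrow> 'v) \<Rightarrow> 'o \<Rightarrow> ('f,'v) steps \<Rightarrow> real" where
  "path_weight pol x xo h = (if consistent x h then path_prob pol xo h else 0)"

lemma path_prob_Nil [simp]: "path_prob pol xo [] = 1"
  by (simp add: path_prob_def)

lemma path_prob_snoc: "path_prob pol xo (h @ [s]) = path_prob pol xo h * pmf (pol xo h) (fst s)"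
  unfolding path_prob_def by (simp add: nth_append take_append)

lemma path_prob_nonneg: "path_prob pol xo h \<ge> 0"
  unfolding path_prob_def by (intro prod_nonneg) auto

lemma path_prob_pos_factor:
  assumes "path_prob pol xo h > 0" "\<tau> < length h"
  shows "pmf (pol xo (take \<tau> h)) (fst (h ! \<tau>)) > 0"
proof -
  have "pmf (pol xo (take \<tau> h)) (fst (h ! \<tau>)) \<noteq> 0"
  proof
    assume "pmf (pol xo (take \<tau> h)) (fst (h ! \<tau>)) = 0"
    hence "path_prob pol xo h = 0" unfolding path_prob_def using assms(2) by (intro prod_zero) auto
    thus False using assms(1) by simp
  qed
  thus ?thesis by (simp add: order_less_le)
qed

lemma consistent_Nil [simp]: "consistent x []"
  by (simp add: consistent_def)

lemma consistent_snoc: "consistent x (h @ [s]) = (consistent x h \<and> snd s = reveal x (fst s))"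
  unfolding consistent_def by (auto simp: nth_append less_Suc_eq)

lemma path_weight_snoc:
  "path_weight pol x xo (h @ [s]) =
     path_weight pol x xo h * pmf (pol xo h) (fst s) * (if snd s = reveal x (fst s) then 1 else 0)"
  by (simp add: path_weight_def path_prob_snoc consistent_snoc)

lemma allowed_acquired: "\<tau> < length h \<Longrightarrow> acquired h \<subseteq> r \<Longrightarrow> allowed r (fst (h ! \<tau>))"
  unfolding allowed_def acquired_def
  by (cases "fst (h ! \<tau>)") (auto intro!: image_eqI[of _ fst "h ! \<tau>"])

lemma gen_add: "gen pol x xo (m + k) hs = bind_pmf (gen pol x xo m hs) (gen pol x xo k)"
  by (induction m arbitrary: hs) (simp_all add: bind_assoc_pmf bind_return_pmf)

lemma gen_Suc_snoc:
  "gen pol x xo (Suc m) hs = bind_pmf (gen pol x xo m hs) (\<lambda>h. map_pmf (\<lambda>a. h @ [(a, reveal x a)]) (pol xo h))"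
proof -
  have "gen pol x xo (Suc m) hs = bind_pmf (gen pol x xo m hs) (gen pol x xo (Suc 0))"
    using gen_add[of pol x xo m "Suc 0" hs] by (simp del: gen.simps)
  also have "gen pol x xo (Suc 0) = (\<lambda>h. map_pmf (\<lambda>a. h @ [(a, reveal x a)]) (pol xo h))"
    by (simp add: map_pmf_def fun_eq_iff)
  finally show ?thesis .
qed

lemma set_pmf_genD: "tr \<in> set_pmf (gen pol x xo k hs) \<Longrightarrow> length tr = length hs + k \<and> take (length hs) tr = hs"
proof (induction k arbitrary: hs)
  case (Suc k)
  then obtain a where "tr \<in> set_pmf (gen pol x xo k (hs @ [(a, reveal x a)]))" by auto
  from Suc.IH[OF this] show ?case by (auto simp: min_def dest: arg_cong[of _ _ "take (length hs)"])
qed simp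

lemma gen_set_pmfI:
  assumes "length h = k" "consistent x h" "path_prob pol xo h > 0"
  shows "h \<in> set_pmf (gen pol x xo k [])"
  using assms
proof (induction k arbitrary: h)
  case (Suc k)
  then obtain h0 s where h: "h = h0 @ [s]" by (cases h rule: rev_cases) auto
  have "length h0 = k" using Suc h by simp
  moreover have c: "consistent x h0" "snd s = reveal x (fst s)" using Suc(3) h by (auto simp: consistent_snoc)
  moreover have p: "path_prob pol xo h0 > 0" "pmf (pol xo h0) (fst s) > 0"
    using Suc(4) h path_prob_nonneg[of pol xo h0] by (auto simp: path_prob_snoc zero_less_mult_iff)
  ultimately have "h0 \<in> set_pmf (gen pol x xo k [])" using Suc.IH by blast
  moreover have "fst s \<in> set_pmf (pol xo h0)" using p(2) by (simp add: set_pmf_iff)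
  ultimately show ?case unfolding gen_Suc_snoc h using c(2)
    by (auto intro!: bexI[of _ h0] bexI[of _ "fst s"] simp: prod_eq_iff)
qed simp

lemma map_pmf_take_gen:
  assumes "t \<le> T"
  shows "map_pmf (take t) (gen pol x xo T []) = gen pol x xo t []"
proof -
  obtain k where T: "T = t + k" using assms le_iff_add by blast
  have "map_pmf (take t) (gen pol x xo T []) = bind_pmf (gen pol x xo t []) (\<lambda>h. map_pmf (take t) (gen pol x xo k h))"
    unfolding T gen_add map_bind_pmf ..
  also have "\<dots> = bind_pmf (gen pol x xo t []) return_pmf"
  proof (intro bind_pmf_cong refl)
    fix h assume "h \<in> set_pmf (gen pol x xo t [])"
    hence "length h = t" using set_pmf_genD by fastforce
    hence "map_pmf (take t) (gen pol x xo k h) = map_pmf (\<lambda>_. h) (gen pol x xo k h)"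
      by (intro map_pmf_cong refl) (auto dest: set_pmf_genD)
    thus "map_pmf (take t) (gen pol x xo k h) = return_pmf h" by (simp add: map_pmf_const)
  qed
  finally show ?thesis by (simp add: bind_return_pmf')
qed

lemma finite_steps_length: "finite {h :: ('f::finite, 'v::finite) steps. length h = k}"
  using finite_lists_length_eq[of "UNIV :: ('f option \<times> 'v option) set" k] by simp

lemma finite_set_pmf_gen: "finite (set_pmf (gen pol x xo k (hs :: ('f::finite, 'v::finite) steps)))"
  by (rule finite_subset[OF _ finite_steps_length[of "length hs + k"]]) (auto dest: set_pmf_genD)

lemma sum_steps_length_Suc:
  "(\<Sum>h\<in>{h :: ('f::finite, 'v::finite) steps. length h = Suc k}. F h) = (\<Sum>h\<in>{h. length h = k}. \<Sum>s\<in>UNIV. F (h @ [s]))"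
proof -
  have bij: "bij_betw (\<lambda>(h, s). h @ [s]) ({h. length h = k} \<times> UNIV) {h :: ('f, 'v) steps. length h = Suc k}"
  proof (rule bij_betwI[where g = "\<lambda>h. (butlast h, last h)"])
    fix h :: "('f,'v) steps" assume "h \<in> {h. length h = Suc k}"
    thus "(case (butlast h, last h) of (h, s) \<Rightarrow> h @ [s]) = h"
      by (cases h rule: rev_cases) auto
  qed auto
  show ?thesis
    by (subst sum.reindex_bij_betw[OF bij, symmetric]) (simp add: sum.cartesian_product split_def)
qed

lemma sum_UNIV_prod:
  "(\<Sum>z\<in>(UNIV::('a::finite \<times> 'b::finite) set). F z) = (\<Sum>a\<in>UNIV. \<Sum>b\<in>UNIV. F (a, b))"
proof -
  have "(\<Sum>a\<in>UNIV. \<Sum>b\<in>UNIV. F (a, b)) = (\<Sum>z\<in>UNIV \<times> UNIV. F z)"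
    by (subst sum.cartesian_product) (simp add: split_def)
  thus ?thesis by simp
qed

lemma sum_reveal:
  fixes F :: "'f::finite option \<Rightarrow> 'v::finite option \<Rightarrow> real"
  shows "(\<Sum>s\<in>UNIV. (if snd s = reveal x (fst s) then 1 else 0) * F (fst s) (snd s)) = (\<Sum>a\<in>UNIV. F a (reveal x a))"
proof -
  have "(\<Sum>v\<in>UNIV. (if v = reveal x a then 1 else 0) * F a v) = (\<Sum>v\<in>UNIV. if v = reveal x a then F a v else 0)" for a
    by (intro sum.cong) auto
  hence "(\<Sum>v\<in>UNIV. (if v = reveal x a then 1 else 0) * F a v) = F a (reveal x a)" for a
    by (simp add: sum.delta')
  thus ?thesis by (simp add: sum_UNIV_prod)
qed

lemma expectation_finite_UNIV:
  fixes p :: "'a::finite pmf" and f :: "'a \<Rightarrow> real"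
  shows "measure_pmf.expectation p f = (\<Sum>a\<in>UNIV. pmf p a * f a)"
  by (subst integral_measure_pmf[of UNIV]) auto

lemma measure_pmf_finite_UNIV:
  fixes p :: "'a::finite pmf"
  shows "measure_pmf.prob p A = (\<Sum>a\<in>UNIV. pmf p a * (if a \<in> A then 1 else 0))"
proof -
  have "measure_pmf.prob p A = (\<Sum>a\<in>A. pmf p a)" by (rule measure_measure_pmf_finite) simp
  thus ?thesis by (simp add: if_distrib sum.If_cases Int_absorb1)
qed

lemma expectation_gen_Suc:
  fixes g :: "('f::finite, 'v::finite) steps \<Rightarrow> real"
  shows "measure_pmf.expectation (gen pol x xo (Suc k) []) g =
    measure_pmf.expectation (gen pol x xo k []) (\<lambda>h. \<Sum>a\<in>UNIV. pmf (pol xo h) a * g (h @ [(a, reveal x a)]))"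
  unfolding gen_Suc_snoc
  by (subst pmf_expectation_bind[of "set_pmf (gen pol x xo k [])"])
     (auto simp: finite_set_pmf_gen integral_measure_pmf[of "set_pmf (gen pol x xo k [])"] expectation_finite_UNIV
           intro!: sum.cong)

lemma expectation_gen:
  fixes g :: "('f::finite, 'v::finite) steps \<Rightarrow> real"
  shows "measure_pmf.expectation (gen pol x xo k []) g = (\<Sum>h\<in>{h. length h = k}. path_weight pol x xo h * g h)"
proof (induction k arbitrary: g)
  case 0
  have "{h :: ('f,'v) steps. length h = 0} = {[]}" by auto
  thus ?case by (simp add: path_weight_def)
next
  case (Suc k)
  have "measure_pmf.expectation (gen pol x xo (Suc k) []) g =
        (\<Sum>h\<in>{h. length h = k}. path_weight pol x xo h * (\<Sum>a\<in>UNIV. pmf (pol xo h) a * g (h @ [(a, reveal x a)])))"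
    by (subst expectation_gen_Suc) (rule Suc)
  also have "\<dots> = (\<Sum>h\<in>{h. length h = k}. \<Sum>s\<in>UNIV. path_weight pol x xo (h @ [s]) * g (h @ [s]))"
  proof (intro sum.cong refl)
    fix h
    show "path_weight pol x xo h * (\<Sum>a\<in>UNIV. pmf (pol xo h) a * g (h @ [(a, reveal x a)])) =
          (\<Sum>s\<in>UNIV. path_weight pol x xo (h @ [s]) * g (h @ [s]))"
      using sum_reveal[of x "\<lambda>a v. path_weight pol x xo h * pmf (pol xo h) a * g (h @ [(a, v)])"]
      by (simp add: path_weight_snoc sum_distrib_left mult_ac)
  qed
  finally show ?case by (simp add: sum_steps_length_Suc)
qed

lemma expectation_cond_pmf:
  fixes p :: "'a pmf" and f :: "'a \<Rightarrow> real"
  assumes fin: "finite (set_pmf p)" and pos: "measure_pmf.prob p s > 0"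
  shows "measure_pmf.expectation (cond_pmf p s) f = measure_pmf.expectation p (\<lambda>w. indicator s w * f w) / measure_pmf.prob p s"
proof -
  have ne: "set_pmf p \<inter> s \<noteq> {}" using pos measure_pmf_zero_iff[of p s] by auto
  have "measure_pmf.expectation (cond_pmf p s) f = (\<Sum>w\<in>set_pmf p. pmf (cond_pmf p s) w * f w)"
    using ne by (subst integral_measure_pmf[OF fin]) auto
  also have "\<dots> = (\<Sum>w\<in>set_pmf p. pmf p w * (indicator s w * f w)) / measure_pmf.prob p s"
    by (simp add: pmf_cond[OF ne] sum_divide_distrib indicator_def; intro sum.cong; auto)
  also have "(\<Sum>w\<in>set_pmf p. pmf p w * (indicator s w * f w)) = measure_pmf.expectation p (\<lambda>w. indicator s w * f w)"
    by (subst integral_measure_pmf[OF fin]) auto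
  finally show ?thesis .
qed

lemma sum_swap_factor:
  fixes f :: "'a \<Rightarrow> 'c \<Rightarrow> real"
  shows "(\<Sum>x\<in>X. \<Sum>r\<in>R. \<Sum>h\<in>H. f x h * g r h) = (\<Sum>h\<in>H. (\<Sum>r\<in>R. g r h) * (\<Sum>x\<in>X. f x h))"
proof -
  have "(\<Sum>x\<in>X. \<Sum>r\<in>R. \<Sum>h\<in>H. f x h * g r h) = (\<Sum>h\<in>H. \<Sum>x\<in>X. \<Sum>r\<in>R. f x h * g r h)"
    by (subst sum.swap) (simp add: sum.swap[of _ R H])
  thus ?thesis by (simp add: sum_distrib_left sum_distrib_right mult_ac sum.swap[of _ R X])
qed

lemma sum_swap_factor2:
  fixes f :: "'a \<Rightarrow> 'c \<Rightarrow> 'd \<Rightarrow> real"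
  shows "(\<Sum>x\<in>X. \<Sum>r\<in>R. \<Sum>h\<in>H. \<Sum>a\<in>U. f x h a * g r h a) = (\<Sum>h\<in>H. \<Sum>a\<in>U. (\<Sum>r\<in>R. g r h a) * (\<Sum>x\<in>X. f x h a))"
  using sum_swap_factor[where f = "\<lambda>x p. f x (fst p) (snd p)" and g = "\<lambda>r p. g r (fst p) (snd p)" and H = "H \<times> U"]
  by (simp add: sum.cartesian_product split_def)

lemma expectation_gen_Vtilde:
  fixes Qt :: "nat \<Rightarrow> 'o \<Rightarrow> ('f::finite,'v::finite) steps \<Rightarrow> 'f option \<Rightarrow> real"
  assumes "1 \<le> t"
  shows "measure_pmf.expectation (gen pol x xo t []) (\<lambda>h. Qt t xo (take (t - 1) h) (fst (h ! (t - 1))))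
       = measure_pmf.expectation (gen pol x xo (t - 1) []) (Vtilde Qt pol t xo)"
proof -
  obtain k where t: "t = Suc k" using assms by (cases t) auto
  have "measure_pmf.expectation (gen pol x xo t []) (\<lambda>h. Qt t xo (take (t - 1) h) (fst (h ! (t - 1))))
      = measure_pmf.expectation (gen pol x xo k []) (\<lambda>h. \<Sum>a\<in>UNIV. pmf (pol xo h) a *
           Qt t xo (take k (h @ [(a, reveal x a)])) (fst ((h @ [(a, reveal x a)]) ! k)))"
    unfolding t diff_Suc_1 by (rule expectation_gen_Suc)
  also have "\<dots> = measure_pmf.expectation (gen pol x xo k []) (Vtilde Qt pol t xo)"
    by (intro integral_cong_AE AE_pmfI) (auto simp: Vtilde_def nth_append mult_ac dest!: set_pmf_genD)
  finally show ?thesis by (simp add: t)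
qed

section \<open>A weak law of large numbers for finitely supported distributions\<close>

lemma sample_mean_deviation_bound_pmf:
  fixes D :: "'a pmf" and g :: "'a \<Rightarrow> real"
  assumes B: "\<And>x. x \<in> set_pmf D \<Longrightarrow> \<bar>g x\<bar> < B" and n: "n > 0" and \<epsilon>: "\<epsilon> > 0"
  shows "measure_pmf.prob (Pi_pmf {..<n} dflt (\<lambda>_. D))
            {\<omega>. \<bar>(\<Sum>i<n. g (\<omega> i)) / real n - measure_pmf.expectation D g\<bar> > \<epsilon>}
         \<le> 2 * exp (-2 * real n * \<epsilon>\<^sup>2 / (B - (-B))\<^sup>2)"
proof -
  let ?M = "Pi_pmf {..<n} dflt (\<lambda>_. D)"
  have component: "map_pmf (\<lambda>\<omega>. \<omega> j) ?M = D" if "j < n" for j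
    using that by (simp add: Pi_pmf_component)
  have "-B < B" using B[OF set_pmf_not_empty[THEN some_in_eq[THEN iffD2]]] by linarith
  interpret H: Hoeffding_ineq_iid "measure_pmf ?M" "{..<n}" "\<lambda>i \<omega>. g (\<omega> i)" "\<lambda>\<omega>. g (\<omega> 0)" "-B" B
    "measure_pmf.expectation ?M (\<lambda>\<omega>. g (\<omega> 0))"
  proof unfold_locales
    show "prob_space.indep_vars (measure_pmf ?M) (\<lambda>_. borel) (\<lambda>i \<omega>. g (\<omega> i)) {..<n}"
      by (intro prob_space.indep_vars_compose2[OF _ indep_vars_Pi_pmf])
         (auto simp: measure_pmf.prob_space_axioms)
  next
    have distr_eq: "distr (measure_pmf ?M) borel (\<lambda>\<omega>. g (\<omega> j)) = distr (measure_pmf D) borel g" if "j < n" for j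
    proof -
      have "distr (measure_pmf ?M) borel (\<lambda>\<omega>. g (\<omega> j)) = distr (measure_pmf (map_pmf (\<lambda>\<omega>. \<omega> j) ?M)) borel g"
        by (simp add: map_pmf_rep_eq distr_distr comp_def)
      thus ?thesis by (simp only: component[OF that])
    qed
    fix i assume "i \<in> {..<n}"
    thus "distr (measure_pmf ?M) borel (\<lambda>\<omega>. g (\<omega> i)) = distr (measure_pmf ?M) borel (\<lambda>\<omega>. g (\<omega> 0))"
      using distr_eq[of i] distr_eq[of 0] n by simp
  next
    show "AE x in measure_pmf ?M. g (x 0) \<in> {-B..B}"
    proof (rule AE_pmfI)
      fix \<omega> assume "\<omega> \<in> set_pmf ?M"
      hence "\<omega> 0 \<in> set_pmf (map_pmf (\<lambda>\<omega>. \<omega> 0) ?M)" by simp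
      hence "\<omega> 0 \<in> set_pmf D" by (simp only: component[OF n])
      thus "g (\<omega> 0) \<in> {-B..B}" using B by fastforce
    qed
  qed auto
  have mean: "measure_pmf.expectation ?M (\<lambda>\<omega>. g (\<omega> 0)) = measure_pmf.expectation D g"
  proof -
    have "measure_pmf.expectation ?M (\<lambda>\<omega>. g (\<omega> 0)) = measure_pmf.expectation (map_pmf (\<lambda>\<omega>. \<omega> 0) ?M) g"
      by simp
    thus ?thesis by (simp only: component[OF n])
  qed
  have "measure_pmf.prob ?M {\<omega>. \<bar>(\<Sum>i<n. g (\<omega> i)) / real n - measure_pmf.expectation D g\<bar> > \<epsilon>}
      \<le> measure_pmf.prob ?M {x\<in>space (measure_pmf ?M). \<bar>(\<Sum>i\<in>{..<n}. g (x i)) / real (card {..<n})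
            - measure_pmf.expectation ?M (\<lambda>\<omega>. g (\<omega> 0))\<bar> \<ge> \<epsilon>}"
    by (intro measure_pmf.finite_measure_mono) (auto simp: mean)
  also have "\<dots> \<le> 2 * exp (-2 * real (card {..<n}) * \<epsilon>\<^sup>2 / (B - (-B))\<^sup>2)"
    by (rule H.Hoeffding_ineq_abs_ge') (use \<epsilon> \<open>-B < B\<close> n in auto)
  finally show ?thesis by simp
qed

lemma weak_law_large_numbers_finite_pmf:
  fixes D :: "'a pmf" and g :: "'a \<Rightarrow> real"
  assumes fin: "finite (set_pmf D)"
  shows "\<forall>\<epsilon>>0. (\<lambda>n. measure_pmf.prob (Pi_pmf {..<n} dflt (\<lambda>_. D))
            {\<omega>. \<bar>(\<Sum>i<n. g (\<omega> i)) / real n - measure_pmf.expectation D g\<bar> > \<epsilon>}) \<longlonglongrightarrow> 0"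
proof (intro allI impI)
  fix \<epsilon> :: real assume \<epsilon>: "\<epsilon> > 0"
  define B where "B = (\<Sum>x\<in>set_pmf D. \<bar>g x\<bar>) + 1"
  have B: "\<bar>g x\<bar> < B" if "x \<in> set_pmf D" for x
    using member_le_sum[OF that, of "\<lambda>x. \<bar>g x\<bar>"] fin unfolding B_def by auto
  have "B > 0" using B[OF set_pmf_not_empty[THEN some_in_eq[THEN iffD2]]] by linarith
  define c where "c = 2 * \<epsilon>\<^sup>2 / (B - (-B))\<^sup>2"
  have "c > 0" using \<epsilon> \<open>B > 0\<close> by (simp add: c_def)
  have "(\<lambda>n. exp (- c) ^ n) \<longlonglongrightarrow> 0"
    using \<open>c > 0\<close> by (intro LIMSEQ_power_zero) auto
  hence "(\<lambda>n. 2 * exp (- c) ^ n) \<longlonglongrightarrow> 0"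
    using tendsto_mult_right_zero by blast
  moreover have "2 * exp (-2 * real n * \<epsilon>\<^sup>2 / (B - (-B))\<^sup>2) = 2 * exp (- c) ^ n" for n
  proof -
    have "-2 * real n * \<epsilon>\<^sup>2 / (B - (-B))\<^sup>2 = real n * (- c)" by (simp add: c_def)
    thus ?thesis by (simp only: exp_of_nat_mult)
  qed
  ultimately have bound_lim: "(\<lambda>n. 2 * exp (-2 * real n * \<epsilon>\<^sup>2 / (B - (-B))\<^sup>2)) \<longlonglongrightarrow> 0"
    by simp
  show "(\<lambda>n. measure_pmf.prob (Pi_pmf {..<n} dflt (\<lambda>_. D))
            {\<omega>. \<bar>(\<Sum>i<n. g (\<omega> i)) / real n - measure_pmf.expectation D g\<bar> > \<epsilon>}) \<longlonglongrightarrow> 0"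
  proof (rule tendsto_sandwich[OF _ _ tendsto_const bound_lim])
    show "\<forall>\<^sub>F n in sequentially. measure_pmf.prob (Pi_pmf {..<n} dflt (\<lambda>_. D))
            {\<omega>. \<bar>(\<Sum>i<n. g (\<omega> i)) / real n - measure_pmf.expectation D g\<bar> > \<epsilon>}
          \<le> 2 * exp (-2 * real n * \<epsilon>\<^sup>2 / (B - (-B))\<^sup>2)"
      using eventually_gt_at_top[of 0]
      by eventually_elim (rule sample_mean_deviation_bound_pmf[OF B _ \<epsilon>])
  qed simp
qed

section \<open>The semi-offline sampling distribution\<close>

locale semi_offline_setting =
  fixes pXY :: "('o::finite \<times> ('f::finite \<Rightarrow> 'v::finite) \<times> 'y::finite) pmf"
    and piB :: "'o \<Rightarrow> 'f set pmf"
    and piA piSim :: "'o \<Rightarrow> ('f,'v) steps \<Rightarrow> 'f option pmf"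
    and piSimB :: "'f set \<Rightarrow> 'o \<Rightarrow> ('f,'v) steps \<Rightarrow> 'f option pmf"
    and piBhat :: "'o \<Rightarrow> 'f set \<Rightarrow> real"
    and Qt :: "nat \<Rightarrow> 'o \<Rightarrow> ('f,'v) steps \<Rightarrow> 'f option \<Rightarrow> real"
    and cost :: "'o \<Rightarrow> ('f,'v) steps \<Rightarrow> 'y \<Rightarrow> real"
    and T :: nat
  assumes blocked_pos: "\<forall>r xo h a. pmf (piSim xo h) a > 0 \<and> allowed r a \<longrightarrow> pmf (piSimB r xo h) a > 0"
    and offpolicy_pos: "\<forall>xo h a. pmf (piA xo h) a > 0 \<longrightarrow> pmf (piSim xo h) a > 0"
    and semi_offline_pos: "\<forall>xo x y tr. (xo, x, y) \<in> set_pmf pXY \<and> tr \<in> set_pmf (gen piA x xo T [])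
                 \<longrightarrow> measure_pmf.prob (piB xo) {r. acquired tr \<subseteq> r} > 0"
begin

abbreviation "D \<equiv> semi_dist pXY piB piSimB T"

lemma semi_dist_eq: "D = bind_pmf pXY (\<lambda>(xo, x, y). bind_pmf (piB xo) (\<lambda>r.
       map_pmf (\<lambda>tr. ((xo, x, y, r), tr)) (gen (piSimB r) x xo T [])))"
  unfolding semi_dist_def full_dist_def
  by (simp add: bind_assoc_pmf bind_map_pmf split_def)

lemma finite_set_pmf_semi_dist: "finite (set_pmf D)"
  unfolding semi_dist_eq by (auto simp: finite_set_pmf_gen)

lemma set_pmf_semi_distD: "((xo, x, y, r), tr) \<in> set_pmf D \<Longrightarrow> length tr = T \<and> (xo, x, y) \<in> set_pmf pXY"
proof -
  assume "((xo, x, y, r), tr) \<in> set_pmf D"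
  then obtain r' where "(xo, x, y) \<in> set_pmf pXY" "tr \<in> set_pmf (gen (piSimB r') x xo T [])"
    unfolding semi_dist_eq by auto
  with set_pmf_genD[of tr "piSimB r'" x xo T "[]"] show ?thesis by simp
qed

lemma integrable_semi_dist [simp, intro]: "integrable (measure_pmf D) (f :: _ \<Rightarrow> real)"
  by (rule integrable_measure_pmf_finite[OF finite_set_pmf_semi_dist])

lemma expectation_semi_dist:
  "measure_pmf.expectation D G = (\<Sum>xo\<in>UNIV. \<Sum>xy\<in>UNIV. \<Sum>r\<in>UNIV. pmf pXY (xo, xy) * pmf (piB xo) r *
      measure_pmf.expectation (gen (piSimB r) (fst xy) xo T []) (\<lambda>tr. G ((xo, fst xy, snd xy, r), tr)))"
proof -
  have "measure_pmf.expectation D G = (\<Sum>z\<in>UNIV. pmf pXY z * (\<Sum>r\<in>UNIV. pmf (piB (fst z)) r *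
      measure_pmf.expectation (gen (piSimB r) (fst (snd z)) (fst z) T []) (\<lambda>tr. G ((fst z, fst (snd z), snd (snd z), r), tr))))"
    unfolding semi_dist_eq
    by (subst pmf_expectation_bind[of UNIV])
       (auto simp: finite_set_pmf_gen split_def pmf_expectation_bind[of UNIV] intro!: sum.cong)
  also have "\<dots> = (\<Sum>xo\<in>UNIV. \<Sum>xy\<in>UNIV. \<Sum>r\<in>UNIV. pmf pXY (xo, xy) * pmf (piB xo) r *
      measure_pmf.expectation (gen (piSimB r) (fst xy) xo T []) (\<lambda>tr. G ((xo, fst xy, snd xy, r), tr)))"
    by (subst sum_UNIV_prod) (simp add: sum_distrib_left mult_ac)
  finally show ?thesis .
qed


lemma expectation_semi_dist_take:
  assumes t: "t \<le> T" and F: "\<And>xo x y r tr. length tr = T \<Longrightarrow> F ((xo, x, y, r), tr) = G xo x y r (take t tr)"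
  shows "measure_pmf.expectation D F = (\<Sum>xo\<in>UNIV. \<Sum>xy\<in>UNIV. \<Sum>r\<in>UNIV. pmf pXY (xo, xy) * pmf (piB xo) r *
      measure_pmf.expectation (gen (piSimB r) (fst xy) xo t []) (G xo (fst xy) (snd xy) r))"
  unfolding expectation_semi_dist
proof (intro sum.cong refl arg_cong2[where f = "(*)"])
  fix xo xy r
  have "measure_pmf.expectation (gen (piSimB r) (fst xy) xo T []) (\<lambda>tr. F ((xo, fst xy, snd xy, r), tr))
      = measure_pmf.expectation (gen (piSimB r) (fst xy) xo T []) (\<lambda>tr. G xo (fst xy) (snd xy) r (take t tr))"
    by (intro integral_cong_AE AE_pmfI) (auto simp: F dest: set_pmf_genD)
  also have "\<dots> = measure_pmf.expectation (map_pmf (take t) (gen (piSimB r) (fst xy) xo T [])) (G xo (fst xy) (snd xy) r)"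
    by simp
  also have "\<dots> = measure_pmf.expectation (gen (piSimB r) (fst xy) xo t []) (G xo (fst xy) (snd xy) r)"
    by (simp add: map_pmf_take_gen[OF t])
  finally show "measure_pmf.expectation (gen (piSimB r) (fst xy) xo T []) (\<lambda>tr. F ((xo, fst xy, snd xy, r), tr))
      = measure_pmf.expectation (gen (piSimB r) (fst xy) xo t []) (G xo (fst xy) (snd xy) r)" .
qed

lemma online_J_eq: "online_J pXY piA cost T = (\<Sum>xo\<in>UNIV. \<Sum>xy\<in>UNIV. pmf pXY (xo, xy) *
     measure_pmf.expectation (gen piA (fst xy) xo T []) (\<lambda>tr. cost xo tr (snd xy)))"
  unfolding online_J_def
  by (subst pmf_expectation_bind[of UNIV]) (auto simp: finite_set_pmf_gen split_def sum_UNIV_prod)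

abbreviation "\<rho> \<equiv> rho piA piSimB piBhat"

lemma rho_take: "\<rho> r xo tr t = \<rho> r xo (take t tr) t"
  unfolding rho_def by (auto simp: min_def intro!: prod.cong)

lemma rho_snoc_reveal:
  assumes "length h = t - 1" "1 \<le> t"
  shows "\<rho> r xo (h @ [(a, v)]) t = \<rho> r xo (h @ [(a, None)]) t"
proof -
  have "acquired (take t (h @ [(a, v)])) = acquired (take t (h @ [(a, None)]))"
    using assms by (simp add: acquired_def)
  moreover have "(\<Prod>\<tau><t. pmf (piA xo (take \<tau> (h @ [(a, v)]))) (fst ((h @ [(a, v)]) ! \<tau>))
                 / pmf (piSimB r xo (take \<tau> (h @ [(a, v)]))) (fst ((h @ [(a, v)]) ! \<tau>))) =
        (\<Prod>\<tau><t. pmf (piA xo (take \<tau> (h @ [(a, None)]))) (fst ((h @ [(a, None)]) ! \<tau>))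
                 / pmf (piSimB r xo (take \<tau> (h @ [(a, None)]))) (fst ((h @ [(a, None)]) ! \<tau>)))"
    using assms by (intro prod.cong refl) (auto simp: nth_append take_append)
  ultimately show ?thesis unfolding rho_def by simp
qed

text \<open>The weight \<open>\<rho>\<^sup>t\<close> depends on the first \<open>t - 1\<close> steps and on the action \<open>A'\<^sup>t\<close>,
  but not on the value revealed by \<open>A'\<^sup>t\<close>.\<close>

definition rho_of_action :: "nat \<Rightarrow> 'o \<Rightarrow> 'f set \<Rightarrow> ('f,'v) steps \<Rightarrow> 'f option \<Rightarrow> real" where
  "rho_of_action t xo r h a = \<rho> r xo (h @ [(a, None)]) t"

lemma rho_eq_rho_of_action:
  assumes "1 \<le> t" "t \<le> length tr"
  shows "\<rho> r xo tr t = rho_of_action t xo r (take (t - 1) tr) (fst (tr ! (t - 1)))"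
proof -
  have "take t tr = take (t - 1) tr @ [tr ! (t - 1)]"
    using assms take_Suc_conv_app_nth[of "t - 1" tr] by simp
  hence "\<rho> r xo tr t = \<rho> r xo (take (t - 1) tr @ [(fst (tr ! (t - 1)), snd (tr ! (t - 1)))]) t"
    using rho_take[of r xo tr t] by simp
  also have "\<dots> = rho_of_action t xo r (take (t - 1) tr) (fst (tr ! (t - 1)))"
    unfolding rho_of_action_def using assms by (intro rho_snoc_reveal) auto
  finally show ?thesis .
qed

lemma path_prob_pos_if_rho_nonzero:
  assumes "\<rho> r xo h t \<noteq> 0" "length h = t"
  shows "path_prob piA xo h > 0"
proof (cases "t = 0")
  case False
  hence "(\<Prod>\<tau><t. pmf (piA xo (take \<tau> h)) (fst (h ! \<tau>)) / pmf (piSimB r xo (take \<tau> h)) (fst (h ! \<tau>))) \<noteq> 0"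
    using assms(1) unfolding rho_def by auto
  hence "\<forall>\<tau><t. pmf (piA xo (take \<tau> h)) (fst (h ! \<tau>)) \<noteq> 0" by (auto simp: prod_zero_iff)
  thus ?thesis unfolding path_prob_def using assms(2) by (intro prod_pos) (auto simp: order_less_le)
qed (use assms in simp)

lemma sim_pos: "pmf (piA xo h) a > 0 \<Longrightarrow> allowed r a \<Longrightarrow> pmf (piSimB r xo h) a > 0"
  using offpolicy_pos blocked_pos by blast

lemma path_prob_sim_pos:
  assumes "path_prob piA xo h > 0" "acquired h \<subseteq> r"
  shows "path_prob (piSimB r) xo h > 0"
  unfolding path_prob_def
  by (intro prod_pos sim_pos path_prob_pos_factor[OF assms(1)] allowed_acquired[OF _ assms(2)]) auto

lemma exists_covering_missingness:
  assumes xy: "(xo, x, y) \<in> set_pmf pXY" and c: "consistent x h" and l: "length h = t" and t: "t \<le> T"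
    and p: "path_prob piA xo h > 0"
  shows "\<exists>r\<in>set_pmf (piB xo). acquired h \<subseteq> r"
proof -
  have "h \<in> set_pmf (gen piA x xo t [])" by (rule gen_set_pmfI[OF l c p])
  also have "gen piA x xo t [] = map_pmf (take t) (gen piA x xo T [])" by (rule map_pmf_take_gen[OF t, symmetric])
  finally obtain tr where tr: "tr \<in> set_pmf (gen piA x xo T [])" and h: "h = take t tr" by auto
  have "measure_pmf.prob (piB xo) {r. acquired tr \<subseteq> r} > 0"
    using semi_offline_pos xy tr by blast
  then obtain r where r: "r \<in> set_pmf (piB xo)" "acquired tr \<subseteq> r"
    using measure_pmf_zero_iff[of "piB xo" "{r. acquired tr \<subseteq> r}"] by auto
  have "acquired h \<subseteq> acquired tr" unfolding h acquired_def using set_take_subset[of t tr] by auto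
  thus ?thesis using r by auto
qed

section \<open>Correct propensity model\<close>

abbreviation propensity_correct :: bool where
  "propensity_correct \<equiv> \<forall>xo s. piBhat xo s = measure_pmf.prob (piB xo) {r. s \<subseteq> r}"

lemma path_weight_mult_rho:
  assumes PB: propensity_correct and l: "length h = t"
  shows "path_weight (piSimB r) x xo h * \<rho> r xo h t
       = path_weight piA x xo h * (if acquired h \<subseteq> r then 1 else 0) / piBhat xo (acquired h)"
proof (cases "t = 0 \<or> \<not> (consistent x h \<and> acquired h \<subseteq> r)")
  case True
  moreover have "piBhat xo {} = 1" using PB by simp
  ultimately show ?thesis using l by (auto simp: rho_def path_weight_def acquired_def)
next
  case False
  hence t: "t \<noteq> 0" and c: "consistent x h" and r: "acquired h \<subseteq> r" by auto
  let ?pA = "\<lambda>\<tau>. pmf (piA xo (take \<tau> h)) (fst (h ! \<tau>))"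
  let ?pS = "\<lambda>\<tau>. pmf (piSimB r xo (take \<tau> h)) (fst (h ! \<tau>))"
  \<comment> \<open>a factor \<open>?pS \<tau>\<close> can only vanish where \<open>?pA \<tau>\<close> does, by off-policy positivity\<close>
  have cancel: "?pS \<tau> * (?pA \<tau> / ?pS \<tau>) = ?pA \<tau>" if "\<tau> < t" for \<tau>
  proof (cases "?pS \<tau> = 0")
    case True
    hence "\<not> ?pA \<tau> > 0" using sim_pos[OF _ allowed_acquired[OF _ r]] that l by fastforce
    thus ?thesis using True by (simp add: order_less_le)
  qed simp
  have "path_prob (piSimB r) xo h * (\<Prod>\<tau><t. ?pA \<tau> / ?pS \<tau>) = (\<Prod>\<tau><t. ?pS \<tau> * (?pA \<tau> / ?pS \<tau>))"
    unfolding path_prob_def l by (rule prod.distrib[symmetric])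
  also have "\<dots> = path_prob piA xo h" unfolding path_prob_def l using cancel by (intro prod.cong) auto
  finally show ?thesis using c r t l by (simp add: path_weight_def rho_def)
qed

lemma covering_prob_div_piBhat:
  assumes PB: propensity_correct and xy: "(xo, x, y) \<in> set_pmf pXY"
    and l: "length h = t" and t: "t \<le> T" and w: "path_weight piA x xo h \<noteq> 0"
  shows "(\<Sum>r\<in>UNIV. pmf (piB xo) r * (if acquired h \<subseteq> r then 1 else 0)) / piBhat xo (acquired h) = 1"
proof -
  have "consistent x h" and "path_prob piA xo h > 0"
    using w path_prob_nonneg[of piA xo h] by (auto simp: path_weight_def order_less_le split: if_splits)
  then obtain r where "r \<in> set_pmf (piB xo)" "acquired h \<subseteq> r"
    using exists_covering_missingness[OF xy _ l t] by blast
  hence "measure_pmf.prob (piB xo) {r. acquired h \<subseteq> r} \<noteq> 0"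
    using measure_pmf_zero_iff[of "piB xo" "{r. acquired h \<subseteq> r}"] by auto
  thus ?thesis using PB by (simp add: measure_pmf_finite_UNIV)
qed

lemma sum_rho_weighted_gen:
  assumes PB: propensity_correct and xy: "(xo, x, y) \<in> set_pmf pXY" and t: "t \<le> T"
  shows "(\<Sum>r\<in>UNIV. pmf (piB xo) r * measure_pmf.expectation (gen (piSimB r) x xo t []) (\<lambda>h. \<rho> r xo h t * g h))
       = measure_pmf.expectation (gen piA x xo t []) g"
proof -
  let ?ratio = "\<lambda>h. (\<Sum>r\<in>UNIV. pmf (piB xo) r * (if acquired h \<subseteq> r then 1 else 0)) / piBhat xo (acquired h)"
  have "(\<Sum>r\<in>UNIV. pmf (piB xo) r * measure_pmf.expectation (gen (piSimB r) x xo t []) (\<lambda>h. \<rho> r xo h t * g h))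
      = (\<Sum>r\<in>UNIV. \<Sum>h\<in>{h. length h = t}. pmf (piB xo) r * ((path_weight (piSimB r) x xo h * \<rho> r xo h t) * g h))"
    by (simp add: expectation_gen sum_distrib_left mult_ac)
  also have "\<dots> = (\<Sum>r\<in>UNIV. \<Sum>h\<in>{h. length h = t}. pmf (piB xo) r *
       ((path_weight piA x xo h * (if acquired h \<subseteq> r then 1 else 0) / piBhat xo (acquired h)) * g h))"
    by (intro sum.cong refl) (auto simp: path_weight_mult_rho[OF PB])
  also have "\<dots> = (\<Sum>h\<in>{h. length h = t}. path_weight piA x xo h * g h * ?ratio h)"
    by (subst sum.swap, intro sum.cong refl) (simp add: sum_distrib_left sum_divide_distrib mult_ac)
  also have "\<dots> = (\<Sum>h\<in>{h. length h = t}. path_weight piA x xo h * g h)"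
  proof (intro sum.cong refl)
    fix h :: "('f,'v) steps" assume "h \<in> {h. length h = t}"
    thus "path_weight piA x xo h * g h * ?ratio h = path_weight piA x xo h * g h"
      using covering_prob_div_piBhat[OF PB xy _ t, of h] by (cases "path_weight piA x xo h = 0") auto
  qed
  finally show ?thesis by (simp add: expectation_gen)
qed

lemma expectation_rho_weighted:
  assumes PB: propensity_correct and t: "t \<le> T"
    and F: "\<And>xo x y r tr. length tr = T \<Longrightarrow> F ((xo, x, y, r), tr) = \<rho> r xo tr t * g xo x y (take t tr)"
  shows "measure_pmf.expectation D F = (\<Sum>xo\<in>UNIV. \<Sum>xy\<in>UNIV. pmf pXY (xo, xy) *
            measure_pmf.expectation (gen piA (fst xy) xo t []) (g xo (fst xy) (snd xy)))"
proof -
  have "measure_pmf.expectation D F = (\<Sum>xo\<in>UNIV. \<Sum>xy\<in>UNIV. \<Sum>r\<in>UNIV. pmf pXY (xo, xy) * pmf (piB xo) r *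
      measure_pmf.expectation (gen (piSimB r) (fst xy) xo t []) (\<lambda>h. \<rho> r xo h t * g xo (fst xy) (snd xy) h))"
    by (rule expectation_semi_dist_take[OF t]) (simp add: F rho_take[symmetric])
  also have "\<dots> = (\<Sum>xo\<in>UNIV. \<Sum>xy\<in>UNIV. pmf pXY (xo, xy) *
            measure_pmf.expectation (gen piA (fst xy) xo t []) (g xo (fst xy) (snd xy)))"
  proof (intro sum.cong refl)
    fix xo xy
    show "(\<Sum>r\<in>UNIV. pmf pXY (xo, xy) * pmf (piB xo) r *
            measure_pmf.expectation (gen (piSimB r) (fst xy) xo t []) (\<lambda>h. \<rho> r xo h t * g xo (fst xy) (snd xy) h))
        = pmf pXY (xo, xy) * measure_pmf.expectation (gen piA (fst xy) xo t []) (g xo (fst xy) (snd xy))"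
    proof (cases "(xo, xy) \<in> set_pmf pXY")
      case True
      have "(\<Sum>r\<in>UNIV. pmf pXY (xo, xy) * pmf (piB xo) r *
              measure_pmf.expectation (gen (piSimB r) (fst xy) xo t []) (\<lambda>h. \<rho> r xo h t * g xo (fst xy) (snd xy) h))
          = pmf pXY (xo, xy) * (\<Sum>r\<in>UNIV. pmf (piB xo) r *
              measure_pmf.expectation (gen (piSimB r) (fst xy) xo t []) (\<lambda>h. \<rho> r xo h t * g xo (fst xy) (snd xy) h))"
        by (simp add: sum_distrib_left mult.assoc)
      thus ?thesis using sum_rho_weighted_gen[OF PB _ t, of xo "fst xy" "snd xy"] True by simp
    qed (simp add: set_pmf_iff)
  qed
  finally show ?thesis .
qed

definition cost_term where
  "cost_term w = (case w of ((xo, x, y, r), tr) \<Rightarrow> \<rho> r xo tr T * cost xo tr y)"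

definition Q_term where
  "Q_term t w = (case w of ((xo, x, y, r), tr) \<Rightarrow> \<rho> r xo tr t * Qt t xo (take (t - 1) tr) (fst (tr ! (t - 1))))"

definition V_term where
  "V_term t w = (case w of ((xo, x, y, r), tr) \<Rightarrow> \<rho> r xo tr (t - 1) * Vtilde Qt piA t xo (take (t - 1) tr))"

lemma expectation_drl_summand:
  "measure_pmf.expectation D (drl_summand piA piSimB piBhat Qt cost T) =
     measure_pmf.expectation D cost_term
     + (\<Sum>t\<in>{1..T}. measure_pmf.expectation D (V_term t) - measure_pmf.expectation D (Q_term t))"
proof -
  have "drl_summand piA piSimB piBhat Qt cost T = (\<lambda>w. cost_term w + (\<Sum>t\<in>{1..T}. V_term t w - Q_term t w))"
    by (auto simp: drl_summand_def cost_term_def Q_term_def V_term_def fun_eq_iff split: prod.splits)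
  thus ?thesis by (simp add: Bochner_Integration.integral_sum)
qed

lemma drl_mean_if_propensity_correct:
  assumes PB: propensity_correct
  shows "measure_pmf.expectation D (drl_summand piA piSimB piBhat Qt cost T) = online_J pXY piA cost T"
proof -
  have "measure_pmf.expectation D (Q_term t) = measure_pmf.expectation D (V_term t)" if "t \<in> {1..T}" for t
  proof -
    have t1: "1 \<le> t" and tT: "t \<le> T" using that by auto
    have "measure_pmf.expectation D (Q_term t) = (\<Sum>xo\<in>UNIV. \<Sum>xy\<in>UNIV. pmf pXY (xo, xy) *
            measure_pmf.expectation (gen piA (fst xy) xo t []) (\<lambda>h. Qt t xo (take (t - 1) h) (fst (h ! (t - 1)))))"
      by (rule expectation_rho_weighted[OF PB tT]) (use t1 in \<open>simp add: Q_term_def min_def\<close>)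
    also have "\<dots> = (\<Sum>xo\<in>UNIV. \<Sum>xy\<in>UNIV. pmf pXY (xo, xy) *
            measure_pmf.expectation (gen piA (fst xy) xo (t - 1) []) (Vtilde Qt piA t xo))"
      by (simp only: expectation_gen_Vtilde[OF t1])
    also have "\<dots> = measure_pmf.expectation D (V_term t)"
      by (rule expectation_rho_weighted[OF PB, symmetric]) (use tT in \<open>simp_all add: V_term_def rho_take[symmetric]\<close>)
    finally show ?thesis .
  qed
  moreover have "measure_pmf.expectation D cost_term = online_J pXY piA cost T"
    unfolding online_J_eq by (rule expectation_rho_weighted[OF PB le_refl]) (simp add: cost_term_def)
  ultimately show ?thesis unfolding expectation_drl_summand by simp
qed

section \<open>Correct Q-function\<close>

text \<open>Unnormalised conditional expectation given \<open>X\<^sub>o = xo\<close> and the values revealed along \<open>h\<close>.\<close>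

definition cons_integral :: "'o \<Rightarrow> ('f,'v) steps \<Rightarrow> (('f \<Rightarrow> 'v) \<times> 'y \<Rightarrow> real) \<Rightarrow> real" where
  "cons_integral xo h \<psi> = (\<Sum>xy\<in>UNIV. pmf pXY (xo, xy) * (if consistent (fst xy) h then 1 else 0) * \<psi> xy)"

definition cons_mass :: "'o \<Rightarrow> ('f,'v) steps \<Rightarrow> real" where
  "cons_mass xo h = cons_integral xo h (\<lambda>_. 1)"

lemma cons_integral_const: "cons_integral xo h (\<lambda>_. c) = cons_mass xo h * c"
  unfolding cons_integral_def cons_mass_def by (simp add: sum_distrib_right)

lemma cons_integral_sum:
  "cons_integral xo h (\<lambda>xy. \<Sum>a\<in>UNIV. c a * f a xy) = (\<Sum>a\<in>UNIV. c a * cons_integral xo h (f a))"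
  unfolding cons_integral_def sum_distrib_left by (subst sum.swap) (simp add: mult_ac)

lemma cons_mass_nonneg: "cons_mass xo h \<ge> 0"
  unfolding cons_mass_def cons_integral_def by (intro sum_nonneg) auto

lemma cons_integral_zero:
  assumes "cons_mass xo h = 0"
  shows "cons_integral xo h \<psi> = 0"
proof -
  have "\<forall>xy\<in>UNIV. pmf pXY (xo, xy) * (if consistent (fst xy) h then 1 else 0) = 0"
    using assms sum_nonneg_eq_0_iff[of UNIV "\<lambda>xy. pmf pXY (xo, xy) * (if consistent (fst xy) h then 1 else 0)"]
    unfolding cons_mass_def cons_integral_def by simp
  hence "pmf pXY (xo, xy) * (if consistent (fst xy) h then 1 else 0) = 0" for xy by blast
  thus ?thesis unfolding cons_integral_def by (intro sum.neutral ballI) (simp add: mult.commute[of _ "\<psi> _"])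
qed

lemma exists_consistent_if_cons_mass:
  assumes "cons_mass xo h \<noteq> 0"
  obtains x y where "(xo, x, y) \<in> set_pmf pXY" "consistent x h"
proof -
  obtain xy where "pmf pXY (xo, xy) * (if consistent (fst xy) h then 1 else 0) \<noteq> 0"
    using assms unfolding cons_mass_def cons_integral_def by (metis (no_types, lifting) mult.right_neutral sum.neutral)
  thus ?thesis using that[of "fst xy" "snd xy"] by (auto simp: set_pmf_iff split: if_splits)
qed

lemma expectation_semi_dist_factor:
  assumes t: "t \<le> T"
    and F: "\<And>xo x y r tr. length tr = T \<Longrightarrow> F ((xo, x, y, r), tr) = G xo r (take t tr) * \<Psi> xo x y (take t tr)"
  shows "measure_pmf.expectation D F = (\<Sum>xo\<in>UNIV. \<Sum>h\<in>{h. length h = t}.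
     (\<Sum>r\<in>UNIV. pmf (piB xo) r * path_prob (piSimB r) xo h * G xo r h) * cons_integral xo h (\<lambda>xy. \<Psi> xo (fst xy) (snd xy) h))"
proof -
  have "measure_pmf.expectation D F = (\<Sum>xo\<in>UNIV. \<Sum>xy\<in>UNIV. \<Sum>r\<in>UNIV. \<Sum>h\<in>{h. length h = t}.
       (pmf pXY (xo, xy) * (if consistent (fst xy) h then 1 else 0) * \<Psi> xo (fst xy) (snd xy) h) *
       (pmf (piB xo) r * path_prob (piSimB r) xo h * G xo r h))"
    by (subst expectation_semi_dist_take[OF t, of F "\<lambda>xo x y r h. G xo r h * \<Psi> xo x y h"])
       (auto simp: F expectation_gen sum_distrib_left path_weight_def mult_ac intro!: sum.cong)
  thus ?thesis unfolding cons_integral_def by (simp only: sum_swap_factor)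
qed

lemma expectation_semi_dist_factor_last:
  assumes t1: "1 \<le> t" and t: "t \<le> T"
    and F: "\<And>xo x y r tr. length tr = T \<Longrightarrow>
              F ((xo, x, y, r), tr) = G xo r (take (t - 1) tr) (fst (tr ! (t - 1))) * \<Psi> xo x y (take t tr)"
  shows "measure_pmf.expectation D F = (\<Sum>xo\<in>UNIV. \<Sum>h\<in>{h. length h = t - 1}. \<Sum>a\<in>UNIV.
     (\<Sum>r\<in>UNIV. pmf (piB xo) r * path_prob (piSimB r) xo h * pmf (piSimB r xo h) a * G xo r h a) *
      cons_integral xo h (\<lambda>xy. \<Psi> xo (fst xy) (snd xy) (h @ [(a, reveal (fst xy) a)])))"
proof -
  obtain k where tk: "t = Suc k" using t1 by (cases t) auto
  have inner: "measure_pmf.expectation (gen (piSimB r) x xo (Suc k) []) (\<lambda>h. G xo r (take k h) (fst (h ! k)) * \<Psi> xo x y h)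
      = (\<Sum>h\<in>{h. length h = k}. \<Sum>a\<in>UNIV. ((if consistent x h then 1 else 0) * \<Psi> xo x y (h @ [(a, reveal x a)])) *
            (path_prob (piSimB r) xo h * pmf (piSimB r xo h) a * G xo r h a))" for xo x y r
    by (subst expectation_gen_Suc, subst expectation_gen)
       (auto simp: sum_distrib_left path_weight_def mult_ac nth_append intro!: sum.cong)
  have "measure_pmf.expectation D F = (\<Sum>xo\<in>UNIV. \<Sum>xy\<in>UNIV. \<Sum>r\<in>UNIV. pmf pXY (xo, xy) * pmf (piB xo) r *
      measure_pmf.expectation (gen (piSimB r) (fst xy) xo (Suc k) [])
        (\<lambda>h. G xo r (take k h) (fst (h ! k)) * \<Psi> xo (fst xy) (snd xy) h))"
    by (rule expectation_semi_dist_take[OF t[unfolded tk]]) (use t tk in \<open>simp add: F\<close>)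
  also have "\<dots> = (\<Sum>xo\<in>UNIV. \<Sum>xy\<in>UNIV. \<Sum>r\<in>UNIV. \<Sum>h\<in>{h. length h = k}. \<Sum>a\<in>UNIV.
       (pmf pXY (xo, xy) * (if consistent (fst xy) h then 1 else 0) * \<Psi> xo (fst xy) (snd xy) (h @ [(a, reveal (fst xy) a)])) *
       (pmf (piB xo) r * path_prob (piSimB r) xo h * pmf (piSimB r xo h) a * G xo r h a))"
    unfolding inner by (simp add: sum_distrib_left mult_ac)
  finally show ?thesis unfolding cons_integral_def tk diff_Suc_1 by (simp only: sum_swap_factor2)
qed

definition sim_mass :: "'o \<Rightarrow> ('f,'v) steps \<Rightarrow> 'f option \<Rightarrow> real" where
  "sim_mass xo h a = (\<Sum>r\<in>UNIV. pmf (piB xo) r * path_prob (piSimB r) xo h * pmf (piSimB r xo h) a)"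

lemma sim_mass_nonneg: "sim_mass xo h a \<ge> 0"
  unfolding sim_mass_def by (intro sum_nonneg mult_nonneg_nonneg path_prob_nonneg) auto

lemma sim_mass_zero:
  assumes "sim_mass xo h a = 0"
  shows "(\<Sum>r\<in>UNIV. pmf (piB xo) r * path_prob (piSimB r) xo h * pmf (piSimB r xo h) a * G r) = 0"
proof -
  have "pmf (piB xo) r * path_prob (piSimB r) xo h * pmf (piSimB r xo h) a = 0" for r
    using assms sum_nonneg_eq_0_iff[of UNIV "\<lambda>r. pmf (piB xo) r * path_prob (piSimB r) xo h * pmf (piSimB r xo h) a"]
    unfolding sim_mass_def by (simp add: path_prob_nonneg)
  thus ?thesis by (intro sum.neutral) simp
qed

lemma sim_mass_pos:
  assumes xy: "(xo, x, y) \<in> set_pmf pXY" and c: "consistent x h" and l: "length h = t" and t: "t < T"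
    and p: "path_prob piA xo h > 0" and a: "pmf (piA xo h) a > 0"
  shows "sim_mass xo h a > 0"
proof -
  let ?h = "h @ [(a, reveal x a)]"
  have "consistent x ?h" "path_prob piA xo ?h > 0" using c p a by (simp_all add: consistent_snoc path_prob_snoc)
  then obtain r where r: "r \<in> set_pmf (piB xo)" "acquired ?h \<subseteq> r"
    using exists_covering_missingness[OF xy, of ?h "Suc t"] l t by auto
  hence "acquired h \<subseteq> r" "allowed r a" unfolding acquired_def allowed_def by (auto split: option.split)
  hence "pmf (piB xo) r * path_prob (piSimB r) xo h * pmf (piSimB r xo h) a > 0"
    using r(1) path_prob_sim_pos[OF p] sim_pos[OF a] by (simp add: pmf_positive)
  also have "\<dots> \<le> sim_mass xo h a"
    unfolding sim_mass_def by (rule member_le_sum) (auto intro!: mult_nonneg_nonneg path_prob_nonneg)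
  finally show ?thesis .
qed

lemma sum_prefix_delta:
  assumes "length h = t - 1"
  shows "(\<Sum>xo'\<in>UNIV. \<Sum>h'\<in>{h. length h = t - 1}. \<Sum>a'\<in>UNIV.
     (\<Sum>r\<in>UNIV. pmf (piB xo') r * path_prob (piSimB r) xo' h' * pmf (piSimB r xo' h') a' *
        (if xo' = xo \<and> h' = h \<and> a' = a then 1 else 0)) * W xo' h' a') = sim_mass xo h a * W xo h a"
proof -
  have "(\<Sum>r\<in>UNIV. pmf (piB xo') r * path_prob (piSimB r) xo' h' * pmf (piSimB r xo' h') a' *
        (if xo' = xo \<and> h' = h \<and> a' = a then 1 else 0)) * W xo' h' a'
      = (if a' = a then if h' = h then if xo' = xo then sim_mass xo h a * W xo h a else 0 else 0 else 0)" for xo' h' a'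
    by (cases "xo' = xo \<and> h' = h \<and> a' = a") (auto simp: sim_mass_def)
  thus ?thesis using assms by (simp add: sum.delta sum.delta' finite_steps_length)
qed

lemma prob_prefix_event:
  assumes t1: "1 \<le> t" and t: "t \<le> T" and h: "length h = t - 1"
  shows "measure_pmf.prob D (prefix_event t xo h a) = sim_mass xo h a * cons_mass xo h"
proof -
  have "measure_pmf.prob D (prefix_event t xo h a) = measure_pmf.expectation D (indicator (prefix_event t xo h a))"
    by simp
  also have "\<dots> = (\<Sum>xo'\<in>UNIV. \<Sum>h'\<in>{h. length h = t - 1}. \<Sum>a'\<in>UNIV.
     (\<Sum>r\<in>UNIV. pmf (piB xo') r * path_prob (piSimB r) xo' h' * pmf (piSimB r xo' h') a' *
        (if xo' = xo \<and> h' = h \<and> a' = a then 1 else 0)) * cons_integral xo' h' (\<lambda>_. 1))"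
    by (rule expectation_semi_dist_factor_last[OF t1 t]) (auto simp: prefix_event_def indicator_def)
  also have "\<dots> = sim_mass xo h a * cons_integral xo h (\<lambda>_. 1)" by (rule sum_prefix_delta[OF h])
  also have "\<dots> = sim_mass xo h a * cons_mass xo h" by (simp add: cons_mass_def)
  finally show ?thesis .
qed

definition remaining_cost :: "nat \<Rightarrow> 'o \<Rightarrow> ('f \<Rightarrow> 'v) \<Rightarrow> 'y \<Rightarrow> ('f,'v) steps \<Rightarrow> real" where
  "remaining_cost t xo x y h = measure_pmf.expectation (gen piA x xo (T - t) h) (\<lambda>tr'. cost xo tr' y)"

lemma remaining_cost_Suc:
  assumes "t < T"
  shows "remaining_cost t xo x y h = (\<Sum>a\<in>UNIV. pmf (piA xo h) a * remaining_cost (Suc t) xo x y (h @ [(a, reveal x a)]))"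
proof -
  have "T - t = Suc (T - Suc t)" using assms by simp
  thus ?thesis unfolding remaining_cost_def
    by (simp, subst pmf_expectation_bind[of UNIV]) (auto simp: finite_set_pmf_gen)
qed

lemma Q_true_eq:
  assumes t1: "1 \<le> t" and t: "t \<le> T" and h: "length h = t - 1"
    and pos: "measure_pmf.prob D (prefix_event t xo h a) > 0"
  shows "cons_mass xo h * Q_true pXY piB piSimB piA cost T t xo h a
       = cons_integral xo h (\<lambda>xy. remaining_cost t xo (fst xy) (snd xy) (h @ [(a, reveal (fst xy) a)]))"
    (is "_ = ?I")
proof -
  let ?E = "prefix_event t xo h a"
  have P: "measure_pmf.prob D ?E = sim_mass xo h a * cons_mass xo h" by (rule prob_prefix_event[OF t1 t h])
  have "Q_true pXY piB piSimB piA cost T t xo h a =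
    measure_pmf.expectation D (\<lambda>w. indicator ?E w * (case w of ((xo', x, y, r), tr) \<Rightarrow>
      remaining_cost t xo x y (h @ [(a, reveal x a)]))) / measure_pmf.prob D ?E"
    unfolding Q_true_def
    by (subst expectation_cond_pmf[OF finite_set_pmf_semi_dist pos]) (simp add: remaining_cost_def split_def)
  also have "measure_pmf.expectation D (\<lambda>w. indicator ?E w * (case w of ((xo', x, y, r), tr) \<Rightarrow>
      remaining_cost t xo x y (h @ [(a, reveal x a)])))
     = (\<Sum>xo'\<in>UNIV. \<Sum>h'\<in>{h. length h = t - 1}. \<Sum>a'\<in>UNIV.
         (\<Sum>r\<in>UNIV. pmf (piB xo') r * path_prob (piSimB r) xo' h' * pmf (piSimB r xo' h') a' *
            (if xo' = xo \<and> h' = h \<and> a' = a then 1 else 0)) * cons_integral xo' h'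
         (\<lambda>xy. remaining_cost t xo (fst xy) (snd xy) (h @ [(a, reveal (fst xy) a)])))"
    by (rule expectation_semi_dist_factor_last[OF t1 t]) (auto simp: prefix_event_def indicator_def)
  also have "\<dots> = sim_mass xo h a * ?I" by (rule sum_prefix_delta[OF h])
  finally have "Q_true pXY piB piSimB piA cost T t xo h a = sim_mass xo h a * ?I / (sim_mass xo h a * cons_mass xo h)"
    by (simp add: P)
  moreover have "sim_mass xo h a \<noteq> 0" "cons_mass xo h \<noteq> 0" using pos P by auto
  ultimately show ?thesis by (simp add: field_simps)
qed

abbreviation Q_correct :: bool where
  "Q_correct \<equiv> \<forall>t\<in>{1..T}. \<forall>xo h a. measure_pmf.prob D (prefix_event t xo h a) > 0
                  \<longrightarrow> Qt t xo h a = Q_true pXY piB piSimB piA cost T t xo h a"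

lemma Qt_cons_integral:
  assumes QG: Q_correct and t1: "1 \<le> t" and t: "t \<le> T" and h: "length h = t - 1"
    and pos: "sim_mass xo h a * cons_mass xo h > 0"
  shows "cons_mass xo h * Qt t xo h a
       = cons_integral xo h (\<lambda>xy. remaining_cost t xo (fst xy) (snd xy) (h @ [(a, reveal (fst xy) a)]))"
proof -
  have "measure_pmf.prob D (prefix_event t xo h a) > 0" using prob_prefix_event[OF t1 t h] pos by simp
  thus ?thesis using QG t1 t Q_true_eq[OF t1 t h] by auto
qed

lemma expectation_rho_Qt:
  assumes QG: Q_correct and t1: "1 \<le> t" and t: "t \<le> T"
  shows "measure_pmf.expectation D (\<lambda>w. case w of ((xo, x, y, r), tr) \<Rightarrow> \<rho> r xo tr t * Qt t xo (take (t - 1) tr) (fst (tr ! (t - 1))))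
       = measure_pmf.expectation D (\<lambda>w. case w of ((xo, x, y, r), tr) \<Rightarrow> \<rho> r xo tr t * remaining_cost t xo x y (take t tr))"
proof -
  let ?B = "\<lambda>xo h a. \<Sum>r\<in>UNIV. pmf (piB xo) r * path_prob (piSimB r) xo h * pmf (piSimB r xo h) a * rho_of_action t xo r h a"
  let ?C = "\<lambda>xo h a. cons_integral xo h (\<lambda>xy. remaining_cost t xo (fst xy) (snd xy) (h @ [(a, reveal (fst xy) a)]))"
  have "measure_pmf.expectation D (\<lambda>w. case w of ((xo, x, y, r), tr) \<Rightarrow> \<rho> r xo tr t * Qt t xo (take (t - 1) tr) (fst (tr ! (t - 1))))
      = (\<Sum>xo\<in>UNIV. \<Sum>h\<in>{h. length h = t - 1}. \<Sum>a\<in>UNIV. ?B xo h a * (cons_mass xo h * Qt t xo h a))"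
    by (subst expectation_semi_dist_factor_last[OF t1 t, where \<Psi> = "\<lambda>xo x y h. Qt t xo (take (t - 1) h) (fst (h ! (t - 1)))"])
       (use t1 t in \<open>simp_all add: rho_eq_rho_of_action min_def nth_append cons_integral_const\<close>)
  also have "\<dots> = (\<Sum>xo\<in>UNIV. \<Sum>h\<in>{h. length h = t - 1}. \<Sum>a\<in>UNIV. ?B xo h a * ?C xo h a)"
  proof (intro sum.cong refl)
    fix xo h a assume h: "h \<in> {h :: ('f,'v) steps. length h = t - 1}"
    show "?B xo h a * (cons_mass xo h * Qt t xo h a) = ?B xo h a * ?C xo h a"
    proof (cases "sim_mass xo h a = 0 \<or> cons_mass xo h = 0")
      case True
      thus ?thesis using sim_mass_zero[of xo h a] cons_integral_zero[of xo h] by auto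
    next
      case False
      hence "sim_mass xo h a * cons_mass xo h > 0"
        using sim_mass_nonneg[of xo h a] cons_mass_nonneg[of xo h] by (simp add: order_less_le)
      thus ?thesis using Qt_cons_integral[OF QG t1 t] h by simp
    qed
  qed
  also have "\<dots> = measure_pmf.expectation D (\<lambda>w. case w of ((xo, x, y, r), tr) \<Rightarrow> \<rho> r xo tr t * remaining_cost t xo x y (take t tr))"
    by (rule expectation_semi_dist_factor_last[OF t1 t, symmetric]) (use t1 t in \<open>simp add: rho_eq_rho_of_action\<close>)
  finally show ?thesis .
qed

lemma cons_integral_Vtilde:
  assumes QG: Q_correct and t: "t < T" and h: "length h = t" and p: "path_prob piA xo h > 0"
  shows "cons_integral xo h (\<lambda>_. Vtilde Qt piA (Suc t) xo h)
       = cons_integral xo h (\<lambda>xy. remaining_cost t xo (fst xy) (snd xy) h)"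
proof -
  let ?C = "\<lambda>a. cons_integral xo h (\<lambda>xy. remaining_cost (Suc t) xo (fst xy) (snd xy) (h @ [(a, reveal (fst xy) a)]))"
  have step: "pmf (piA xo h) a * (cons_mass xo h * Qt (Suc t) xo h a) = pmf (piA xo h) a * ?C a" for a
  proof (cases "pmf (piA xo h) a = 0 \<or> cons_mass xo h = 0")
    case True
    thus ?thesis using cons_integral_zero[of xo h] by auto
  next
    case False
    hence a: "pmf (piA xo h) a > 0" and m: "cons_mass xo h \<noteq> 0" by (auto simp: order_less_le)
    obtain x y where "(xo, x, y) \<in> set_pmf pXY" "consistent x h"
      using exists_consistent_if_cons_mass[OF m] .
    hence "sim_mass xo h a > 0" using sim_mass_pos[OF _ _ h t p a] by blast
    hence "sim_mass xo h a * cons_mass xo h > 0" using m cons_mass_nonneg[of xo h] by (simp add: order_less_le)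
    thus ?thesis using Qt_cons_integral[OF QG, where t = "Suc t"] t h by simp
  qed
  have "cons_integral xo h (\<lambda>_. Vtilde Qt piA (Suc t) xo h)
      = (\<Sum>a\<in>UNIV. pmf (piA xo h) a * (cons_mass xo h * Qt (Suc t) xo h a))"
    by (simp add: cons_integral_const Vtilde_def sum_distrib_left mult_ac)
  also have "\<dots> = (\<Sum>a\<in>UNIV. pmf (piA xo h) a * ?C a)"
    by (rule sum.cong[OF refl step])
  also have "\<dots> = cons_integral xo h (\<lambda>xy. remaining_cost t xo (fst xy) (snd xy) h)"
    by (simp add: remaining_cost_Suc[OF t] cons_integral_sum)
  finally show ?thesis .
qed

lemma expectation_weighted_Vtilde:
  assumes QG: Q_correct and t: "t < T"
    and G: "\<And>xo r h. length h = t \<Longrightarrow> G xo r h \<noteq> 0 \<Longrightarrow> path_prob piA xo h > 0"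
  shows "measure_pmf.expectation D (\<lambda>w. case w of ((xo, x, y, r), tr) \<Rightarrow> G xo r (take t tr) * Vtilde Qt piA (Suc t) xo (take t tr))
       = measure_pmf.expectation D (\<lambda>w. case w of ((xo, x, y, r), tr) \<Rightarrow> G xo r (take t tr) * remaining_cost t xo x y (take t tr))"
proof -
  let ?B = "\<lambda>xo h. \<Sum>r\<in>UNIV. pmf (piB xo) r * path_prob (piSimB r) xo h * G xo r h"
  have tT: "t \<le> T" using t by simp
  have step: "?B xo h * cons_integral xo h (\<lambda>_. Vtilde Qt piA (Suc t) xo h)
      = ?B xo h * cons_integral xo h (\<lambda>xy. remaining_cost t xo (fst xy) (snd xy) h)" if h: "length h = t" for xo h
  proof (cases "?B xo h = 0")
    case False
    then obtain r where "G xo r h \<noteq> 0" by (metis (no_types, lifting) mult_zero_right sum.neutral)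
    thus ?thesis using cons_integral_Vtilde[OF QG t h] G h by simp
  qed simp
  have "measure_pmf.expectation D (\<lambda>w. case w of ((xo, x, y, r), tr) \<Rightarrow> G xo r (take t tr) * Vtilde Qt piA (Suc t) xo (take t tr))
     = (\<Sum>xo\<in>UNIV. \<Sum>h\<in>{h. length h = t}. ?B xo h * cons_integral xo h (\<lambda>xy. Vtilde Qt piA (Suc t) xo h))"
    by (rule expectation_semi_dist_factor[OF tT]) simp
  also have "\<dots> = (\<Sum>xo\<in>UNIV. \<Sum>h\<in>{h. length h = t}. ?B xo h * cons_integral xo h (\<lambda>xy. remaining_cost t xo (fst xy) (snd xy) h))"
    using step by (intro sum.cong refl) simp
  also have "\<dots> = measure_pmf.expectation D (\<lambda>w. case w of ((xo, x, y, r), tr) \<Rightarrow> G xo r (take t tr) * remaining_cost t xo x y (take t tr))"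
    by (rule expectation_semi_dist_factor[OF tT, symmetric]) simp
  finally show ?thesis .
qed

definition value_term where
  "value_term t = measure_pmf.expectation D (\<lambda>w. case w of ((xo, x, y, r), tr) \<Rightarrow> \<rho> r xo tr t * remaining_cost t xo x y (take t tr))"

lemma value_term_0: "value_term 0 = online_J pXY piA cost T"
proof -
  have "value_term 0 = (\<Sum>xo\<in>UNIV. \<Sum>xy\<in>UNIV. \<Sum>r\<in>UNIV. pmf pXY (xo, xy) * pmf (piB xo) r *
      measure_pmf.expectation (gen (piSimB r) (fst xy) xo 0 []) (\<lambda>h. remaining_cost 0 xo (fst xy) (snd xy) h))"
    unfolding value_term_def by (rule expectation_semi_dist_take) (simp_all add: rho_def)
  also have "\<dots> = (\<Sum>xo\<in>UNIV. \<Sum>xy\<in>UNIV. pmf pXY (xo, xy) * remaining_cost 0 xo (fst xy) (snd xy) [] * (\<Sum>r\<in>UNIV. pmf (piB xo) r))"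
    by (simp add: sum_distrib_left sum_distrib_right mult_ac)
  also have "\<dots> = online_J pXY piA cost T"
    unfolding online_J_eq by (simp add: sum_pmf_eq_1 remaining_cost_def)
  finally show ?thesis .
qed

lemma drl_mean_if_Q_correct:
  assumes QG: Q_correct
  shows "measure_pmf.expectation D (drl_summand piA piSimB piBhat Qt cost T) = online_J pXY piA cost T"
proof -
  have "measure_pmf.expectation D (Q_term t) = value_term t" if "t \<in> {1..T}" for t
    unfolding Q_term_def value_term_def using that by (intro expectation_rho_Qt[OF QG]) auto
  moreover have "measure_pmf.expectation D (V_term t) = value_term (t - 1)" if "t \<in> {1..T}" for t
  proof -
    have "t - 1 < T" and "Suc (t - 1) = t" using that by auto
    have "measure_pmf.expectation D (V_term t) = measure_pmf.expectation D (\<lambda>w. case w of ((xo, x, y, r), tr) \<Rightarrow>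
            \<rho> r xo (take (t - 1) tr) (t - 1) * Vtilde Qt piA (Suc (t - 1)) xo (take (t - 1) tr))"
      unfolding V_term_def \<open>Suc (t - 1) = t\<close> by (subst rho_take) (rule refl)
    also have "\<dots> = value_term (t - 1)"
      unfolding value_term_def
      by (subst expectation_weighted_Vtilde[OF QG \<open>t - 1 < T\<close>, where G = "\<lambda>xo r h. \<rho> r xo h (t - 1)"])
         (simp_all add: path_prob_pos_if_rho_nonzero rho_take[symmetric])
    finally show ?thesis .
  qed
  moreover have "measure_pmf.expectation D cost_term = value_term T"
    unfolding value_term_def cost_term_def
    by (intro integral_cong_AE AE_pmfI) (auto simp: remaining_cost_def dest!: set_pmf_semi_distD)
  moreover have "(\<Sum>t\<in>{1..T}. value_term (t - 1) - value_term t) = value_term 0 - value_term T"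
    using sum_telescope''[of 0 T value_term] by (simp add: sum_subtractf)
  ultimately show ?thesis unfolding expectation_drl_summand value_term_0[symmetric] by simp
qed

end

theorem theorem7:
  fixes pXY :: "('o::finite \<times> ('f::finite \<Rightarrow> 'v::finite) \<times> 'y::finite) pmf"
    and piB :: "'o \<Rightarrow> 'f set pmf"
    and piA piSim :: "'o \<Rightarrow> ('f,'v) steps \<Rightarrow> 'f option pmf"
    and piSimB :: "'f set \<Rightarrow> 'o \<Rightarrow> ('f,'v) steps \<Rightarrow> 'f option pmf"
    and piBhat :: "'o \<Rightarrow> 'f set \<Rightarrow> real"
    and Qt :: "nat \<Rightarrow> 'o \<Rightarrow> ('f,'v) steps \<Rightarrow> 'f option \<Rightarrow> real"
    and cost :: "'o \<Rightarrow> ('f,'v) steps \<Rightarrow> 'y \<Rightarrow> real"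
    and T :: nat
  assumes blocked: "\<forall>r xo h i. pmf (piSimB r xo h) (Some i) > 0 \<longrightarrow> i \<in> r"
    and blocked_pos: "\<forall>r xo h a. pmf (piSim xo h) a > 0 \<and> allowed r a \<longrightarrow> pmf (piSimB r xo h) a > 0"
    and offpolicy_pos: "\<forall>xo h a. pmf (piA xo h) a > 0 \<longrightarrow> pmf (piSim xo h) a > 0"
    and semi_offline_pos: "\<forall>xo x y tr. (xo, x, y) \<in> set_pmf pXY \<and> tr \<in> set_pmf (gen piA x xo T [])
                 \<longrightarrow> measure_pmf.prob (piB xo) {r. acquired tr \<subseteq> r} > 0"
    and doubly: "(\<forall>xo s. piBhat xo s = measure_pmf.prob (piB xo) {r. s \<subseteq> r})
       \<or> (\<forall>t\<in>{1..T}. \<forall>xo h a.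
             measure_pmf.prob (semi_dist pXY piB piSimB T) (prefix_event t xo h a) > 0
             \<longrightarrow> Qt t xo h a = Q_true pXY piB piSimB piA cost T t xo h a)"
  shows "\<forall>\<epsilon>>0. (\<lambda>n. measure_pmf.prob (Pi_pmf {..<n} undefined (\<lambda>_. semi_dist pXY piB piSimB T))
                    {\<omega>. \<bar>J_DRL piA piSimB piBhat Qt cost T n \<omega> - online_J pXY piA cost T\<bar> > \<epsilon>})
              \<longlonglongrightarrow> 0"
proof -
  interpret semi_offline_setting pXY piB piA piSim piSimB piBhat Qt cost T
    using blocked_pos offpolicy_pos semi_offline_pos by unfold_locales
  have mean: "measure_pmf.expectation (semi_dist pXY piB piSimB T) (drl_summand piA piSimB piBhat Qt cost T)
      = online_J pXY piA cost T"
    using doubly drl_mean_if_propensity_correct drl_mean_if_Q_correct by blast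
  show ?thesis
    unfolding J_DRL_def mean[symmetric] by (rule weak_law_large_numbers_finite_pmf[OF finite_set_pmf_semi_dist])
qed

end
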